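(* Let $n\ge2$, $D>0$, $\kappa>0$, and for $t>0$ let $\delta_t=\kappa\sqrt t$. Then there exist $t_1>0$ and $C>0$ (depending on $\kappa$, $n$, $D$) such that $\delta_t<\Delta$ and $$\Big|L^{(n)}_t[\hat s^{(n)}_{t,\delta_t}]-\tfrac{n-1}{n}F(\kappa)\Big|\le C\sqrt t\qquad\text{for all }t\in(0,t_1).$$ (For $n=2$, $D=1$ this reads $\tfrac12F(\kappa)-C\sqrt t\le L_t[\hat s_{t,\delta_t}]\le\tfrac12F(\kappa)+C\sqrt t$.)
   Context: Training set: $y_k=2(k-1)\Delta-D$, $k=1,\dots,n$, where $\Delta=D/(n-1)$; $z_k=y_k+\Delta$ for $k\in[n-1]$. $p_{\mathcal N}(x;\sigma)=(\sqrt{2\pi}\sigma)^{-1}e^{-x^2/(2\sigma^2)}$. For $t>0$, $p^{(n)}_t(x)=\frac1n\sum_{k=1}^np_{\mathcal N}(x-y_k;\sqrt t)$. For measurable $f$, $L^{(n)}_t[f]=t\int|f(x)-\tfrac{d}{dx}\log p^{(n)}_t(x)|^2p^{(n)}_t(x)\,dx$. Smoothed PL-ESF, for $\delta\in(0,\Delta)$: $\hat s^{(n)}_{t,\delta}(x)=(y_1-x)/t$ if $x\le y_1+\delta$; $(y_n-x)/t$ if $x\ge y_n-\delta$; $(y_k-x)/t$ if $x\in[y_k-\delta,y_k+\delta]$ for some $k$; $\frac{\delta}{\Delta-\delta}\cdot\frac{x-z_k}{t}$ if $x\in[y_k+\delta,y_{k+1}-\delta]$ for some $k\in[n-1]$ (a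 continuous piecewise-linear function). $F(\kappa)=2\int_\kappa^\infty(u-\kappa)^2p_{\mathcal N}(u;1)\,du$. *)

theory Defs
  imports "HOL-Analysis.Analysis"
begin

definition gridDelta :: "nat \<Rightarrow> real \<Rightarrow> real" where
  "gridDelta n D = D / (real n - 1)"

definition ypt :: "nat \<Rightarrow> real \<Rightarrow> nat \<Rightarrow> real" where
  "ypt n D k = 2 * (real k - 1) * gridDelta n D - D"

definition zpt :: "nat \<Rightarrow> real \<Rightarrow> nat \<Rightarrow> real" where
  "zpt n D k = ypt n D k + gridDelta n D"

definition pN :: "real \<Rightarrow> real \<Rightarrow> real" where
  "pN x \<sigma> = exp (- (x^2) / (2 * \<sigma>^2)) / (sqrt (2 * pi) * \<sigma>)"

definition pt :: "nat \<Rightarrow> real \<Rightarrow> real \<Rightarrow> real \<Rightarrow> real" where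
  "pt n D t x = (1 / real n) * (\<Sum>k=1..n. pN (x - ypt n D k) (sqrt t))"

definition Lt :: "nat \<Rightarrow> real \<Rightarrow> real \<Rightarrow> (real \<Rightarrow> real) \<Rightarrow> real" where
  "Lt n D t f = t * (\<integral>x. (f x - deriv (\<lambda>u. ln (pt n D t u)) x)^2 * pt n D t x \<partial>lborel)"

definition shat :: "nat \<Rightarrow> real \<Rightarrow> real \<Rightarrow> real \<Rightarrow> real \<Rightarrow> real" where
  "shat n D t \<delta> x =
    (if x \<le> ypt n D 1 + \<delta> then (ypt n D 1 - x) / t
     else if x \<ge> ypt n D n - \<delta> then (ypt n D n - x) / t
     else if (\<exists>k\<in>{1..n}. ypt n D k - \<delta> \<le> x \<and> x \<le> ypt n D k + \<delta>)
       then (let k = (SOME k. k \<in> {1..n} \<and> ypt n D k - \<delta> \<le> x \<and> x \<le> ypt n D k + \<delta>)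
             in (ypt n D k - x) / t)
     else (let k = (SOME k. k \<in> {1..n-1} \<and> ypt n D k + \<delta> \<le> x \<and> x \<le> ypt n D (k+1) - \<delta>)
           in \<delta> / (gridDelta n D - \<delta>) * (x - zpt n D k) / t))"

definition Fk :: "real \<Rightarrow> real" where
  "Fk \<kappa> = 2 * (\<integral>u. indicator {\<kappa>..} u * ((u - \<kappa>)^2 * pN u 1) \<partial>lborel)"

end

theory Submission
  imports Defs "HOL-Probability.Distributions"
begin

text \<open>
  Write \<open>\<sigma> = sqrt t\<close>. Substituting \<open>x = y\<^sub>j + \<sigma> u\<close> in the \<open>j\<close>-th Gaussian component,
  \<open>\<sigma>\<close> times the deviation of \<open>s\<^sub>t\<close> from the component score \<open>(y\<^sub>j - x) / \<sigma>\<^sup>2\<close> becomes a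
  function of \<open>u\<close> which, for \<open>\<bar>u\<bar> \<le> \<Delta> / \<sigma>\<close>, equals \<open>\<Delta> / (\<Delta> - \<kappa> \<sigma>)\<close> times a hinge
  \<open>(u - \<kappa>)\<^sub>+\<close> towards a right neighbour of \<open>y\<^sub>j\<close> and \<open>(u + \<kappa>)\<^sub>-\<close> towards a left one, and which
  grows only linearly beyond. Its Gaussian second moment is therefore \<open>F(\<kappa>) / 2\<close> per neighbour up
  to \<open>O(\<sigma>)\<close>, and the \<open>n\<close> points have \<open>2 (n - 1)\<close> neighbours in total. The mixture score is a
  weighted mean of the component scores, so by Cauchy--Schwarz the loss is at most the average
  component loss. Conversely, within distance \<open>\<Delta>\<close> of \<open>y\<^sub>j\<close> all other components have total mass
  \<open>O(\<sigma>\<^sup>3)\<close> by a third-moment bound, which gives the matching lower bound.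
\<close>

section \<open>Gaussian kernel\<close>

lemma pN_eq_normal_density: "s > 0 \<Longrightarrow> pN (x - y) s = normal_density y s x"
  unfolding pN_def normal_density_def
  by (simp add: real_sqrt_mult power2_eq_square[symmetric] real_sqrt_abs divide_simps)

lemma pN_std_normal: "pN u 1 = std_normal_density u"
  using pN_eq_normal_density[of 1 u 0] by simp

lemma pN_pos: "s > 0 \<Longrightarrow> pN x s > 0"
  unfolding pN_def by simp

lemma pN_borel_measurable[measurable]:
  "f \<in> borel_measurable M \<Longrightarrow> (\<lambda>x. pN (f x) s) \<in> borel_measurable M"
  by (erule measurable_compose) (unfold pN_def, measurable)

lemma pN_rescale: "s > 0 \<Longrightarrow> pN (s * u) s = pN u 1 / s"
  unfolding pN_def by (simp add: power_mult_distrib)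

lemma has_real_derivative_pN:
  assumes "s > 0"
  shows "((\<lambda>u. pN (u - y) s) has_real_derivative pN (x - y) s * ((y - x) / s^2)) (at x)"
proof -
  have "((\<lambda>u. - ((u - y)^2) / (2 * s^2)) has_real_derivative (- (x - y) / s^2)) (at x)"
    using assms by (auto intro!: derivative_eq_intros simp: field_simps power2_eq_square)
  from DERIV_cdivide[OF DERIV_chain2[OF DERIV_exp this], of "sqrt (2 * pi) * s"]
  show ?thesis
    unfolding pN_def by (simp add: algebra_simps)
qed

lemma has_bochner_integral_pN_rescale:
  assumes "s > 0" and "has_bochner_integral lborel (\<lambda>u. H (y + s * u) * pN u 1) I"
  shows "has_bochner_integral lborel (\<lambda>x. H x * pN (x - y) s) I"
proof -
  define G where "G x = H x * pN (x - y) s" for x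
  have G_shift: "G (y + s * u) = (1 / s) * (H (y + s * u) * pN u 1)" for u
    unfolding G_def using pN_rescale[OF assms(1), of u] by simp
  have "integrable lborel (\<lambda>u. G (y + s * u))"
    unfolding G_shift using assms(2) by (simp add: has_bochner_integral_iff)
  then have "integrable lborel G"
    using lborel_integrable_real_affine_iff[of s G y] assms(1) by simp
  moreover have "integral\<^sup>L lborel G = \<bar>s\<bar> *\<^sub>R integral\<^sup>L lborel (\<lambda>u. G (y + s * u))"
    by (rule lborel_integral_real_affine) (use assms(1) in simp)
  then have "integral\<^sup>L lborel G = I"
    unfolding G_shift using assms by (simp add: has_bochner_integral_iff)
  ultimately show ?thesis
    unfolding G_def has_bochner_integral_iff by simp
qed

lemma has_bochner_integral_abs_cube_pN:
  "has_bochner_integral lborel (\<lambda>u. \<bar>u\<bar>^3 * pN u 1) (2 * sqrt (2 / pi))"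
  using std_normal_moment_abs_odd[of 1] unfolding pN_std_normal by (simp add: mult.commute)

lemma integrable_abs_cube_pN: "integrable lborel (\<lambda>u. \<bar>u\<bar>^3 * pN u 1)"
  using has_bochner_integral_abs_cube_pN by (simp add: has_bochner_integral_iff)

lemma integral_abs_cube_pN: "(\<integral>u. \<bar>u\<bar>^3 * pN u 1 \<partial>lborel) = 2 * sqrt (2 / pi)"
  using has_bochner_integral_abs_cube_pN by (simp add: has_bochner_integral_iff)

section \<open>Hinge moments\<close>

lemma Fk_nonneg: "Fk \<kappa> \<ge> 0"
  unfolding Fk_def pN_std_normal by (auto intro!: integral_nonneg_AE simp: indicator_def)

lemma has_bochner_integral_right_hinge:
  "has_bochner_integral lborel (\<lambda>u. indicator {\<kappa>..} u * ((u - \<kappa>)^2 * pN u 1)) (Fk \<kappa> / 2)"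
proof -
  have "(\<lambda>u. (u - \<kappa>)^2 * std_normal_density u) =
        (\<lambda>u. std_normal_density u * u^2 - 2 * \<kappa> * (std_normal_density u * u^1) + \<kappa>^2 * std_normal_density u)"
    by (auto simp: fun_eq_iff power2_eq_square algebra_simps)
  moreover have "integrable lborel (\<lambda>u. std_normal_density u * u^2 - 2 * \<kappa> * (std_normal_density u * u^1)
                   + \<kappa>^2 * std_normal_density u)"
    by (intro Bochner_Integration.integrable_add Bochner_Integration.integrable_diff integrable_mult_right
          integrable_std_normal_moment integrable_normal_density) simp
  ultimately have "integrable lborel (\<lambda>u. indicator {\<kappa>..} u *\<^sub>R ((u - \<kappa>)^2 * std_normal_density u))"
    by (intro integrable_mult_indicator) auto
  then show ?thesis
    unfolding has_bochner_integral_iff Fk_def pN_std_normal by simp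
qed

lemma has_bochner_integral_left_hinge:
  "has_bochner_integral lborel (\<lambda>u. indicator {..-\<kappa>} u * ((u + \<kappa>)^2 * pN u 1)) (Fk \<kappa> / 2)"
proof -
  define f where "f u = indicator {..-\<kappa>} u * ((u + \<kappa>)^2 * pN u 1)" for u :: real
  have reflect: "f (0 + (-1) * u) = indicator {\<kappa>..} u * ((u - \<kappa>)^2 * pN u 1)" for u
    unfolding f_def pN_std_normal indicator_def std_normal_density_def
    by (simp add: power2_eq_square algebra_simps)
  have "integrable lborel f"
    using lborel_integrable_real_affine_iff[of "-1" f 0] has_bochner_integral_right_hinge[of \<kappa>]
    unfolding reflect by (simp add: has_bochner_integral_iff)
  moreover have "integral\<^sup>L lborel f = Fk \<kappa> / 2"
    using lborel_integral_real_affine[of "-1" f 0] has_bochner_integral_right_hinge[of \<kappa>]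
    unfolding reflect by (simp add: has_bochner_integral_iff)
  ultimately show ?thesis
    unfolding f_def has_bochner_integral_iff by simp
qed

text \<open>Limit profile of the rescaled residual around the point \<open>y\<^sub>j\<close>: it vanishes on
  \<open>[-\<kappa>, \<kappa>]\<close> and grows linearly towards each neighbour of \<open>y\<^sub>j\<close> that exists.\<close>

definition hinge :: "nat \<Rightarrow> real \<Rightarrow> nat \<Rightarrow> real \<Rightarrow> real" where
  "hinge n \<kappa> j u = (if j < n \<and> \<kappa> \<le> u then u - \<kappa> else 0) + (if 1 < j \<and> u \<le> -\<kappa> then u + \<kappa> else 0)"

lemma abs_hinge_le: "\<kappa> > 0 \<Longrightarrow> \<bar>hinge n \<kappa> j u\<bar> \<le> \<bar>u\<bar>"
  unfolding hinge_def by auto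

lemma has_bochner_integral_hinge_sq:
  assumes "\<kappa> > 0"
  shows "has_bochner_integral lborel (\<lambda>u. (hinge n \<kappa> j u)^2 * pN u 1)
           ((of_bool (j < n) + of_bool (1 < j)) * (Fk \<kappa> / 2))"
proof -
  have "(\<lambda>u. (hinge n \<kappa> j u)^2 * pN u 1) =
        (\<lambda>u. of_bool (j < n) * (indicator {\<kappa>..} u * ((u - \<kappa>)^2 * pN u 1))
           + of_bool (1 < j) * (indicator {..-\<kappa>} u * ((u + \<kappa>)^2 * pN u 1)))"
    using assms unfolding hinge_def indicator_def by (auto simp: fun_eq_iff)
  moreover have "(of_bool (j < n) + of_bool (1 < j)) * (Fk \<kappa> / 2)
      = of_bool (j < n) * (Fk \<kappa> / 2) + of_bool (1 < j) * (Fk \<kappa> / 2 :: real)"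
    by (rule distrib_right)
  ultimately show ?thesis
    by (simp only:) (intro has_bochner_integral_add has_bochner_integral_mult_right
        has_bochner_integral_right_hinge has_bochner_integral_left_hinge)
qed

lemma integrable_hinge_sq: "\<kappa> > 0 \<Longrightarrow> integrable lborel (\<lambda>u. (hinge n \<kappa> j u)^2 * pN u 1)"
  using has_bochner_integral_hinge_sq[of \<kappa> n j] by (simp add: has_bochner_integral_iff)

lemma sum_neighbour_count:
  "n \<ge> 2 \<Longrightarrow> (\<Sum>j=1..n. of_bool (j < n) + of_bool (1 < j) :: real) = 2 * (real n - 1)"
proof -
  assume "n \<ge> 2"
  moreover have "{Suc 0..n} \<inter> {j. j < n} = {Suc 0..<n}" "{Suc 0..n} \<inter> {j. Suc 0 < j} = {2..n}"
    by auto
  ultimately show ?thesis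
    by (simp add: sum.distrib of_nat_diff)
qed

lemma weighted_sum_square_le:
  fixes g a :: "'a \<Rightarrow> real"
  assumes "\<And>k. k \<in> K \<Longrightarrow> g k \<ge> 0"
  shows "(\<Sum>k\<in>K. g k * a k)^2 \<le> (\<Sum>k\<in>K. g k) * (\<Sum>k\<in>K. g k * (a k)^2)"
proof -
  have "(\<Sum>k\<in>K. sqrt (g k) * (sqrt (g k) * a k))^2
          \<le> (\<Sum>k\<in>K. (sqrt (g k))^2) * (\<Sum>k\<in>K. (sqrt (g k) * a k)^2)"
    by (rule Cauchy_Schwarz_ineq_sum)
  moreover have "(\<Sum>k\<in>K. sqrt (g k) * (sqrt (g k) * a k)) = (\<Sum>k\<in>K. g k * a k)"
    using assms by (intro sum.cong) (auto simp: mult.assoc[symmetric])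
  moreover have "(\<Sum>k\<in>K. (sqrt (g k))^2) = (\<Sum>k\<in>K. g k)"
    using assms by (intro sum.cong) auto
  moreover have "(\<Sum>k\<in>K. (sqrt (g k) * a k)^2) = (\<Sum>k\<in>K. g k * (a k)^2)"
    using assms by (intro sum.cong) (auto simp: power_mult_distrib)
  ultimately show ?thesis by simp
qed

lemma square_ratio_minus_one_le:
  fixes \<Delta> \<delta> :: real
  assumes "\<delta> > 0" "2 * \<delta> \<le> \<Delta>"
  shows "(\<Delta> / (\<Delta> - \<delta>))^2 - 1 \<le> 6 * \<delta> / \<Delta>"
proof -
  define r where "r = \<Delta> / (\<Delta> - \<delta>)"
  have "r - 1 = \<delta> / (\<Delta> - \<delta>)" "1 \<le> r" "r + 1 \<le> 3"
    unfolding r_def using assms by (simp_all add: field_simps)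
  moreover have "\<delta> / (\<Delta> - \<delta>) \<le> 2 * \<delta> / \<Delta>"
    using assms by (simp add: divide_simps)
  ultimately have "(r - 1) * (r + 1) \<le> (2 * \<delta> / \<Delta>) * 3"
    using assms by (intro mult_mono) auto
  then show ?thesis
    unfolding r_def[symmetric] by (simp add: power2_eq_square algebra_simps)
qed

section \<open>The grid\<close>

locale grid =
  fixes n :: nat and D :: real
  assumes two_le_n: "2 \<le> n" and D_pos: "0 < D"
begin

abbreviation \<Delta> :: real where "\<Delta> \<equiv> gridDelta n D"

lemma gridDelta_pos: "\<Delta> > 0"
  using two_le_n D_pos unfolding gridDelta_def by auto

lemma ypt_diff: "ypt n D k - ypt n D j = 2 * (real k - real j) * \<Delta>"
  unfolding ypt_def by (simp add: algebra_simps)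

lemma ypt_Suc: "ypt n D (Suc k) = ypt n D k + 2 * \<Delta>"
  unfolding ypt_def by (simp add: algebra_simps)

lemma ypt_first: "ypt n D 1 = - D"
  unfolding ypt_def by simp

lemma ypt_last: "ypt n D n = D"
proof -
  have "(real n - 1) * \<Delta> = D"
    using two_le_n unfolding gridDelta_def by auto
  then show ?thesis
    unfolding ypt_def by (simp add: algebra_simps)
qed

lemma ypt_gap: "k < j \<Longrightarrow> ypt n D k + 2 * \<Delta> \<le> ypt n D j"
proof -
  assume "k < j"
  then have "2 * \<Delta> \<le> 2 * (real j - real k) * \<Delta>"
    using gridDelta_pos by (simp add: mult_right_mono)
  then show ?thesis
    using ypt_diff[of j k] by linarith
qed

lemma ypt_mono: "k \<le> j \<Longrightarrow> ypt n D k \<le> ypt n D j"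
  using ypt_gap[of k j] gridDelta_pos by (cases "k = j") auto

lemma abs_ypt_le: "k \<in> {1..n} \<Longrightarrow> \<bar>ypt n D k\<bar> \<le> D"
  using ypt_mono[of 1 k] ypt_mono[of k n] ypt_first ypt_last by auto

lemma ypt_neighbourhood_unique:
  assumes "ypt n D j - \<Delta> \<le> x" "x < ypt n D j + \<Delta>" "ypt n D i - \<Delta> \<le> x" "x < ypt n D i + \<Delta>"
  shows "i = j"
  using assms ypt_gap[of i j] ypt_gap[of j i] by (cases i j rule: linorder_cases) auto

lemma far_from_other_ypt:
  assumes "ypt n D j - \<Delta> \<le> x" "x < ypt n D j + \<Delta>" "i \<noteq> j"
  shows "\<Delta> \<le> \<bar>x - ypt n D i\<bar>"
  using assms ypt_gap[of i j] ypt_gap[of j i] by (cases "i < j") auto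

end

section \<open>The smoothed piecewise-linear score\<close>

locale pl_esf = grid +
  fixes t \<delta> :: real
  assumes t_pos: "0 < t" and \<delta>_pos: "0 < \<delta>" and two_\<delta>_le: "2 * \<delta> \<le> \<Delta>"
begin

lemma cell_unique:
  assumes "\<bar>x - ypt n D k\<bar> \<le> \<delta>" "\<bar>x - ypt n D j\<bar> \<le> \<delta>"
  shows "k = j"
  using assms ypt_gap[of k j] ypt_gap[of j k] two_\<delta>_le \<delta>_pos by (cases k j rule: linorder_cases) auto

lemma gap_unique:
  assumes "ypt n D k + \<delta> \<le> x" "x \<le> ypt n D (Suc k) - \<delta>"
    and "ypt n D j + \<delta> \<le> x" "x \<le> ypt n D (Suc j) - \<delta>"
  shows "k = j"
  using assms ypt_mono[of "Suc k" j] ypt_mono[of "Suc j" k] \<delta>_pos by (cases k j rule: linorder_cases) auto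

lemma piece_cases:
  obtains "x \<le> ypt n D 1 + \<delta>" | "ypt n D n - \<delta> \<le> x"
  | k where "k \<in> {1..n}" "\<bar>x - ypt n D k\<bar> \<le> \<delta>"
  | k where "k \<in> {1..n-1}" "ypt n D k + \<delta> \<le> x" "x \<le> ypt n D (k+1) - \<delta>"
proof (cases "x \<le> ypt n D 1 + \<delta> \<or> ypt n D n - \<delta> \<le> x")
  case False
  define K where "K = Max {k\<in>{1..n}. ypt n D k \<le> x}"
  have "1 \<in> {k\<in>{1..n}. ypt n D k \<le> x}"
    using False \<delta>_pos two_le_n by auto
  then have K: "K \<in> {k\<in>{1..n}. ypt n D k \<le> x}"
    unfolding K_def by (intro Max_in) auto
  then have "K \<noteq> n"
    using False \<delta>_pos by auto
  then have K_range: "K \<in> {1..n-1}"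
    using K by auto
  have "K + 1 \<notin> {k\<in>{1..n}. ypt n D k \<le> x}"
    using Max_ge[of "{k\<in>{1..n}. ypt n D k \<le> x}" "K + 1"] unfolding K_def[symmetric] by auto
  then have "x < ypt n D (K+1)"
    using K_range by auto
  moreover have "ypt n D K \<le> x"
    using K by auto
  ultimately show ?thesis
    using that(3)[of K] that(3)[of "K+1"] that(4)[OF K_range] K_range
    by (cases "x \<le> ypt n D K + \<delta>"; cases "ypt n D (K+1) - \<delta> \<le> x") auto
qed (use that in blast)

lemma shat_left:
  "x \<le> ypt n D 1 + \<delta> \<Longrightarrow> shat n D t \<delta> x = (ypt n D 1 - x) / t"
  unfolding shat_def by simp

lemma shat_right:
  assumes "ypt n D n - \<delta> \<le> x"
  shows "shat n D t \<delta> x = (ypt n D n - x) / t"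
proof -
  have "\<not> x \<le> ypt n D 1 + \<delta>"
    using assms ypt_gap[of 1 n] two_le_n two_\<delta>_le \<delta>_pos by auto
  then show ?thesis
    using assms unfolding shat_def by simp
qed

lemma shat_cell:
  assumes k: "k \<in> {1..n}" and x: "\<bar>x - ypt n D k\<bar> \<le> \<delta>"
  shows "shat n D t \<delta> x = (ypt n D k - x) / t"
proof (cases "x \<le> ypt n D 1 + \<delta>")
  case True
  have "k = 1"
  proof (rule ccontr)
    assume "k \<noteq> 1"
    then show False
      using k ypt_gap[of 1 k] x True \<delta>_pos two_\<delta>_le by auto
  qed
  then show ?thesis
    using shat_left True by simp
next
  case not_left: False
  show ?thesis
  proof (cases "ypt n D n - \<delta> \<le> x")
    case True
    have "k = n"
    proof (rule ccontr)
      assume "k \<noteq> n"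
      then show False
        using k ypt_gap[of k n] x True \<delta>_pos two_\<delta>_le by auto
    qed
    then show ?thesis
      using shat_right True by simp
  next
    case not_right: False
    have ex: "\<exists>k\<in>{1..n}. ypt n D k - \<delta> \<le> x \<and> x \<le> ypt n D k + \<delta>"
      using k x by (intro bexI[of _ k]) auto
    define k' where "k' = (SOME k. k \<in> {1..n} \<and> ypt n D k - \<delta> \<le> x \<and> x \<le> ypt n D k + \<delta>)"
    have "k' \<in> {1..n} \<and> ypt n D k' - \<delta> \<le> x \<and> x \<le> ypt n D k' + \<delta>"
      unfolding k'_def by (rule someI_ex) (use ex in blast)
    then have "k' = k"
      using cell_unique[of x k' k] x by auto
    then show ?thesis
      using not_left not_right ex unfolding shat_def k'_def[symmetric] by (simp add: Let_def)
  qed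
qed

lemma shat_gap:
  assumes k: "k \<in> {1..n-1}" and x: "ypt n D k + \<delta> \<le> x" "x \<le> ypt n D (k+1) - \<delta>"
  shows "shat n D t \<delta> x = \<delta> / (\<Delta> - \<delta>) * (x - zpt n D k) / t"
proof -
  have slope: "\<delta> / (\<Delta> - \<delta>) * (\<Delta> - \<delta>) = \<delta>"
    using two_\<delta>_le \<delta>_pos by simp
  have at_left_end: "\<delta> / (\<Delta> - \<delta>) * (ypt n D k + \<delta> - zpt n D k) / t = (ypt n D k - (ypt n D k + \<delta>)) / t"
  proof -
    have "ypt n D k + \<delta> - zpt n D k = - (\<Delta> - \<delta>)"
      unfolding zpt_def by simp
    then show ?thesis
      using slope by (simp only: mult_minus_right) simp
  qed
  have at_right_end: "\<delta> / (\<Delta> - \<delta>) * (ypt n D (k+1) - \<delta> - zpt n D k) / t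
      = (ypt n D (k+1) - (ypt n D (k+1) - \<delta>)) / t"
  proof -
    have gap_length: "ypt n D (k+1) - \<delta> - zpt n D k = \<Delta> - \<delta>"
      unfolding zpt_def by (simp add: ypt_Suc)
    show ?thesis
      unfolding gap_length slope by simp
  qed
  show ?thesis
  proof (cases "x \<le> ypt n D 1 + \<delta>")
    case True
    have "k = 1"
      using k ypt_gap[of 1 k] x True \<delta>_pos gridDelta_pos by (cases "k = 1") auto
    then have "x = ypt n D k + \<delta>"
      using True x by auto
    then show ?thesis
      using shat_left True at_left_end \<open>k = 1\<close> by simp
  next
    case not_left: False
    show ?thesis
    proof (cases "ypt n D n - \<delta> \<le> x")
      case True
      have "k + 1 \<le> n"
        using k two_le_n by auto
      then have "k + 1 = n"
        using ypt_gap[of "k+1" n] x True \<delta>_pos gridDelta_pos by (cases "k + 1 = n") auto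
      then have "x = ypt n D (k+1) - \<delta>"
        using True x by auto
      then show ?thesis
        using shat_right True at_right_end \<open>k + 1 = n\<close> by simp
    next
      case not_right: False
      show ?thesis
      proof (cases "\<exists>k\<in>{1..n}. ypt n D k - \<delta> \<le> x \<and> x \<le> ypt n D k + \<delta>")
        case True
        then obtain k' where k': "k' \<in> {1..n}" "\<bar>x - ypt n D k'\<bar> \<le> \<delta>"
          by auto
        have "k' < k \<or> k' = k \<or> k' = k + 1 \<or> k + 1 < k'"
          by auto
        moreover have "\<not> k' < k"
          using ypt_gap[of k' k] k'(2) x \<delta>_pos two_\<delta>_le by auto
        moreover have "\<not> k + 1 < k'"
          using ypt_gap[of "k+1" k'] k'(2) x \<delta>_pos two_\<delta>_le by auto
        ultimately have "k' = k \<and> x = ypt n D k + \<delta> \<or> k' = k + 1 \<and> x = ypt n D (k+1) - \<delta>"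
          using k'(2) x by auto
        then show ?thesis
          using shat_cell[OF k'] at_left_end at_right_end by auto
      next
        case no_cell: False
        define k' where "k' = (SOME j. j \<in> {1..n-1} \<and> ypt n D j + \<delta> \<le> x \<and> x \<le> ypt n D (j+1) - \<delta>)"
        have "\<exists>j. j \<in> {1..n-1} \<and> ypt n D j + \<delta> \<le> x \<and> x \<le> ypt n D (j+1) - \<delta>"
          using k x by blast
        then have "k' \<in> {1..n-1} \<and> ypt n D k' + \<delta> \<le> x \<and> x \<le> ypt n D (k'+1) - \<delta>"
          unfolding k'_def by (rule someI_ex)
        then have "k' = k"
          using gap_unique[of k' x k] x by auto
        moreover have "shat n D t \<delta> x = \<delta> / (\<Delta> - \<delta>) * (x - zpt n D k') / t"
          unfolding shat_def k'_def by (simp only: not_left not_right no_cell if_False Let_def)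
        ultimately show ?thesis
          by simp
      qed
    qed
  qed
qed

lemma abs_shat_le: "\<bar>shat n D t \<delta> x\<bar> \<le> (\<bar>x\<bar> + D) / t"
proof (cases x rule: piece_cases)
  case 1
  have "\<bar>ypt n D 1 - x\<bar> \<le> \<bar>x\<bar> + D"
    using D_pos by (subst ypt_first) arith
  then show ?thesis
    using shat_left[OF 1] t_pos by (simp add: divide_right_mono)
next
  case 2
  have "\<bar>ypt n D n - x\<bar> \<le> \<bar>x\<bar> + D"
    using D_pos by (subst ypt_last) arith
  then show ?thesis
    using shat_right[OF 2] t_pos by (simp add: divide_right_mono)
next
  case (3 k)
  have "\<bar>ypt n D k - x\<bar> \<le> \<bar>x\<bar> + D"
    using abs_ypt_le[OF 3(1)] by linarith
  then show ?thesis
    using shat_cell[OF 3] t_pos by (simp add: divide_right_mono)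
next
  case (4 k)
  have "k \<in> {1..n}" "k + 1 \<in> {1..n}"
    using 4(1) two_le_n by auto
  then have "\<bar>zpt n D k\<bar> \<le> D"
    using abs_ypt_le[of k] abs_ypt_le[of "k+1"] ypt_Suc[of k] gridDelta_pos
    unfolding zpt_def by auto
  then have "\<bar>x - zpt n D k\<bar> \<le> \<bar>x\<bar> + D"
    by linarith
  moreover have "\<delta> / (\<Delta> - \<delta>) \<le> 1"
    using two_\<delta>_le \<delta>_pos by (simp add: divide_simps)
  ultimately have "\<bar>\<delta> / (\<Delta> - \<delta>) * (x - zpt n D k)\<bar> \<le> 1 * (\<bar>x\<bar> + D)"
    unfolding abs_mult using two_\<delta>_le \<delta>_pos by (intro mult_mono) auto
  then have "\<bar>\<delta> / (\<Delta> - \<delta>) * (x - zpt n D k)\<bar> / t \<le> (\<bar>x\<bar> + D) / t"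
    using t_pos by (intro divide_right_mono) auto
  then show ?thesis
    by (simp only: shat_gap[OF 4] abs_divide abs_of_pos[OF t_pos])
qed

lemma shat_borel_measurable[measurable]: "shat n D t \<delta> \<in> borel_measurable borel"
proof (rule measurable_piecewise_restrict)
  define C where "C = {{..ypt n D 1 + \<delta>}, {ypt n D n - \<delta>..}}
    \<union> (\<lambda>k. {ypt n D k - \<delta> .. ypt n D k + \<delta>}) ` {1..n}
    \<union> (\<lambda>k. {ypt n D k + \<delta> .. ypt n D (k+1) - \<delta>}) ` {1..n-1}"
  show "countable C"
    unfolding C_def by (intro countable_finite) auto
  show "\<Omega> \<inter> space borel \<in> sets borel" if "\<Omega> \<in> C" for \<Omega>
    using that unfolding C_def by auto
  show "space borel \<subseteq> \<Union>C"
  proof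
    fix x :: real
    show "x \<in> \<Union>C"
    proof (cases x rule: piece_cases)
      case (3 k)
      then have "{ypt n D k - \<delta> .. ypt n D k + \<delta>} \<in> C" "x \<in> {ypt n D k - \<delta> .. ypt n D k + \<delta>}"
        unfolding C_def by (auto simp: abs_le_iff)
      then show ?thesis
        by blast
    next
      case (4 k)
      then have "{ypt n D k + \<delta> .. ypt n D (k+1) - \<delta>} \<in> C" "x \<in> {ypt n D k + \<delta> .. ypt n D (k+1) - \<delta>}"
        unfolding C_def by auto
      then show ?thesis
        by blast
    qed (auto simp: C_def)
  qed
  fix \<Omega> assume "\<Omega> \<in> C"
  then consider "\<Omega> = {..ypt n D 1 + \<delta>}" | "\<Omega> = {ypt n D n - \<delta>..}"
    | k where "k \<in> {1..n}" "\<Omega> = {ypt n D k - \<delta> .. ypt n D k + \<delta>}"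
    | k where "k \<in> {1..n-1}" "\<Omega> = {ypt n D k + \<delta> .. ypt n D (k+1) - \<delta>}"
    unfolding C_def by blast
  then obtain g where g: "g \<in> borel_measurable borel" and shat_eq: "\<And>x. x \<in> \<Omega> \<Longrightarrow> shat n D t \<delta> x = g x"
  proof cases
    case 1
    then show ?thesis
      using shat_left by (intro that[of "\<lambda>x. (ypt n D 1 - x) / t"]; (measurable | auto))
  next
    case 2
    then show ?thesis
      using shat_right by (intro that[of "\<lambda>x. (ypt n D n - x) / t"]; (measurable | auto))
  next
    case (3 k)
    have "shat n D t \<delta> x = (ypt n D k - x) / t" if "x \<in> \<Omega>" for x
      using 3 that by (intro shat_cell) (auto simp: abs_le_iff)
    then show ?thesis
      by (intro that[of "\<lambda>x. (ypt n D k - x) / t"]; (measurable | blast))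
  next
    case (4 k)
    then show ?thesis
      using shat_gap[of k] by (intro that[of "\<lambda>x. \<delta> / (\<Delta> - \<delta>) * (x - zpt n D k) / t"]; (measurable | auto))
  qed
  show "shat n D t \<delta> \<in> borel_measurable (restrict_space borel \<Omega>)"
    using measurable_cong[of "restrict_space borel \<Omega>" "shat n D t \<delta>" g] g shat_eq
    by (simp add: space_restrict_space measurable_restrict_space1)
qed

end

section \<open>The rescaled residual\<close>

locale gaussian_scale = grid +
  fixes \<kappa> \<sigma> :: real
  assumes \<kappa>_pos: "0 < \<kappa>" and \<sigma>_pos: "0 < \<sigma>" and two_\<kappa>\<sigma>_le: "2 * (\<kappa> * \<sigma>) \<le> \<Delta>"
begin

sublocale pl_esf n D "\<sigma>^2" "\<kappa> * \<sigma>"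
  using \<kappa>_pos \<sigma>_pos two_\<kappa>\<sigma>_le by unfold_locales auto

abbreviation s_hat :: "real \<Rightarrow> real" where "s_hat \<equiv> shat n D (\<sigma>^2) (\<kappa> * \<sigma>)"

definition residual :: "nat \<Rightarrow> real \<Rightarrow> real" where
  "residual j u = \<sigma> * s_hat (ypt n D j + \<sigma> * u) + u"

definition \<rho> :: real where "\<rho> = \<Delta> / (\<Delta> - \<kappa> * \<sigma>)"

lemma \<kappa>\<sigma>_pos: "0 < \<kappa> * \<sigma>"
  using \<kappa>_pos \<sigma>_pos by simp

lemma \<kappa>\<sigma>_less: "\<kappa> * \<sigma> < \<Delta>"
  using \<kappa>\<sigma>_pos two_\<kappa>\<sigma>_le by linarith

lemma \<rho>_ge_1: "1 \<le> \<rho>"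
  unfolding \<rho>_def using \<kappa>\<sigma>_pos \<kappa>\<sigma>_less by (simp add: le_divide_eq)

lemma residual_eq: "s_hat x - (ypt n D j - x) / \<sigma>^2 = residual j ((x - ypt n D j) / \<sigma>) / \<sigma>"
  unfolding residual_def using \<sigma>_pos by (simp add: field_simps power2_eq_square)

lemma residual_borel_measurable[measurable]: "residual j \<in> borel_measurable borel"
  unfolding residual_def by measurable

lemma residual_near:
  assumes j: "j \<in> {1..n}" and u: "\<bar>u\<bar> \<le> \<Delta> / \<sigma>"
  shows "residual j u = \<rho> * hinge n \<kappa> j u"
proof -
  have u_le: "\<sigma> * \<bar>u\<bar> \<le> \<Delta>"
    using u \<sigma>_pos by (simp add: field_simps)
  define x where "x = ypt n D j + \<sigma> * u"
  have residual_x: "residual j u = \<sigma> * s_hat x + u"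
    unfolding residual_def x_def ..
  consider (centre) "\<bar>u\<bar> \<le> \<kappa>" | (right) "\<kappa> < u" | (left) "u < -\<kappa>"
    by linarith
  then show ?thesis
  proof cases
    case centre
    have "\<bar>x - ypt n D j\<bar> \<le> \<kappa> * \<sigma>"
      unfolding x_def using centre \<sigma>_pos by (simp add: abs_mult)
    then have "s_hat x = (ypt n D j - x) / \<sigma>^2"
      using shat_cell[OF j] by simp
    then show ?thesis
      unfolding residual_x x_def hinge_def using centre \<sigma>_pos by (auto simp: power2_eq_square)
  next
    case right
    show ?thesis
    proof (cases "j < n")
      case True
      have j': "j \<in> {1..n-1}"
        using j True by auto
      have "ypt n D j + \<kappa> * \<sigma> \<le> x"
        unfolding x_def using right \<sigma>_pos by simp
      moreover have "x \<le> ypt n D (j+1) - \<kappa> * \<sigma>"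
        unfolding x_def using u_le two_\<kappa>\<sigma>_le ypt_Suc[of j] right \<kappa>_pos \<kappa>\<sigma>_pos by auto
      ultimately have "s_hat x = \<kappa> * \<sigma> / (\<Delta> - \<kappa> * \<sigma>) * (x - zpt n D j) / \<sigma>^2"
        by (rule shat_gap[OF j'])
      then have "residual j u = \<kappa> * \<sigma> / (\<Delta> - \<kappa> * \<sigma>) * (\<sigma> * u - \<Delta>) / \<sigma> + u"
        unfolding residual_x x_def zpt_def using \<sigma>_pos by (simp add: power2_eq_square)
      also have "\<dots> = \<rho> * (u - \<kappa>)"
        unfolding \<rho>_def using \<sigma>_pos \<kappa>\<sigma>_less by (simp add: field_simps)
      finally show ?thesis
        unfolding hinge_def using True right \<kappa>_pos by auto
    next
      case False
      then have "j = n"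
        using j by auto
      have "\<sigma> * \<kappa> \<le> \<sigma> * u"
        using right \<sigma>_pos by (intro mult_left_mono) auto
      then have "ypt n D n - \<kappa> * \<sigma> \<le> x"
        unfolding x_def \<open>j = n\<close> using \<kappa>\<sigma>_pos by (simp add: algebra_simps)
      then have "s_hat x = (ypt n D n - x) / \<sigma>^2"
        by (rule shat_right)
      then show ?thesis
        unfolding residual_x x_def hinge_def using \<sigma>_pos \<open>j = n\<close> right \<kappa>_pos by (auto simp: power2_eq_square)
    qed
  next
    case left
    show ?thesis
    proof (cases "1 < j")
      case True
      define k where "k = j - 1"
      have j_eq: "j = k + 1" and k: "k \<in> {1..n-1}"
        unfolding k_def using j True by auto
      have y_j: "ypt n D j = ypt n D k + 2 * \<Delta>"
        unfolding j_eq using ypt_Suc[of k] by simp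
      have "\<sigma> * (-u) \<le> \<sigma> * \<bar>u\<bar>"
        using \<sigma>_pos by (intro mult_left_mono) auto
      then have "ypt n D k + \<kappa> * \<sigma> \<le> x"
        unfolding x_def y_j using u_le \<kappa>\<sigma>_less by simp
      moreover have "\<sigma> * u \<le> \<sigma> * (-\<kappa>)"
        using left \<sigma>_pos by (intro mult_left_mono) auto
      then have "x \<le> ypt n D (k+1) - \<kappa> * \<sigma>"
        unfolding x_def j_eq[symmetric] by (simp add: algebra_simps)
      ultimately have "s_hat x = \<kappa> * \<sigma> / (\<Delta> - \<kappa> * \<sigma>) * (x - zpt n D k) / \<sigma>^2"
        by (rule shat_gap[OF k])
      then have "residual j u = \<kappa> * \<sigma> / (\<Delta> - \<kappa> * \<sigma>) * (\<sigma> * u + \<Delta>) / \<sigma> + u"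
        unfolding residual_x x_def zpt_def y_j using \<sigma>_pos by (simp add: power2_eq_square)
      also have "\<dots> = \<rho> * (u + \<kappa>)"
        unfolding \<rho>_def using \<sigma>_pos \<kappa>\<sigma>_less by (simp add: field_simps)
      finally show ?thesis
        unfolding hinge_def using True left \<kappa>_pos by auto
    next
      case False
      then have "j = 1"
        using j by auto
      have "\<sigma> * u \<le> \<sigma> * (-\<kappa>)"
        using left \<sigma>_pos by (intro mult_left_mono) auto
      then have "x \<le> ypt n D 1 + \<kappa> * \<sigma>"
        unfolding x_def \<open>j = 1\<close> using \<kappa>\<sigma>_pos by (simp add: algebra_simps)
      then have "s_hat x = (ypt n D 1 - x) / \<sigma>^2"
        by (rule shat_left)
      then show ?thesis
        unfolding residual_x x_def hinge_def using \<sigma>_pos \<open>j = 1\<close> left \<kappa>_pos by (auto simp: power2_eq_square)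
    qed
  qed
qed

lemma abs_residual_le:
  assumes j: "j \<in> {1..n}"
  shows "\<bar>residual j u\<bar> \<le> 2 * \<bar>u\<bar> + 2 * D / \<sigma>"
proof -
  define x where "x = ypt n D j + \<sigma> * u"
  have "\<bar>x\<bar> \<le> D + \<sigma> * \<bar>u\<bar>"
    unfolding x_def using abs_ypt_le[OF j] abs_triangle_ineq[of "ypt n D j" "\<sigma> * u"] \<sigma>_pos
    by (simp add: abs_mult)
  have "\<sigma> * \<bar>s_hat x\<bar> \<le> \<sigma> * ((\<bar>x\<bar> + D) / \<sigma>^2)"
    using abs_shat_le[of x] \<sigma>_pos by (intro mult_left_mono) auto
  also have "\<dots> = (\<bar>x\<bar> + D) / \<sigma>"
    using \<sigma>_pos by (simp add: power2_eq_square)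
  also have "\<dots> \<le> (2 * D + \<sigma> * \<bar>u\<bar>) / \<sigma>"
    using \<open>\<bar>x\<bar> \<le> D + \<sigma> * \<bar>u\<bar>\<close> \<sigma>_pos by (simp add: divide_right_mono)
  also have "\<dots> = 2 * D / \<sigma> + \<bar>u\<bar>"
    using \<sigma>_pos by (simp add: field_simps)
  finally have "\<bar>\<sigma> * s_hat x\<bar> \<le> 2 * D / \<sigma> + \<bar>u\<bar>"
    using \<sigma>_pos by (simp add: abs_mult)
  then show ?thesis
    unfolding residual_def x_def[symmetric] by linarith
qed

lemma residual_sq_far:
  assumes j: "j \<in> {1..n}" and u: "\<Delta> / \<sigma> \<le> \<bar>u\<bar>"
  shows "(residual j u)^2 \<le> (2 + 2 * D / \<Delta>)^2 * \<sigma> * \<bar>u\<bar>^3 / \<Delta>"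
proof -
  have u_ge: "\<Delta> \<le> \<sigma> * \<bar>u\<bar>"
    using u \<sigma>_pos by (simp add: field_simps)
  have "2 * D / \<sigma> = (2 * D / \<Delta>) * (\<Delta> / \<sigma>)"
    using gridDelta_pos \<sigma>_pos by simp
  also have "\<dots> \<le> (2 * D / \<Delta>) * \<bar>u\<bar>"
    using u gridDelta_pos D_pos by (intro mult_left_mono) auto
  finally have "\<bar>residual j u\<bar> \<le> (2 + 2 * D / \<Delta>) * \<bar>u\<bar>"
    using abs_residual_le[OF j, of u] by (simp add: algebra_simps)
  then have "(residual j u)^2 \<le> ((2 + 2 * D / \<Delta>) * \<bar>u\<bar>)^2"
    by (metis abs_ge_zero order_trans power2_abs power_mono)
  also have "\<dots> = (2 + 2 * D / \<Delta>)^2 * (\<bar>u\<bar>^2 * 1)"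
    by (simp add: power_mult_distrib)
  also have "\<dots> \<le> (2 + 2 * D / \<Delta>)^2 * (\<bar>u\<bar>^2 * (\<sigma> * \<bar>u\<bar> / \<Delta>))"
    using u_ge gridDelta_pos by (intro mult_left_mono) (auto simp: field_simps)
  also have "\<dots> = (2 + 2 * D / \<Delta>)^2 * \<sigma> * \<bar>u\<bar>^3 / \<Delta>"
    by (simp add: power3_eq_cube power2_eq_square)
  finally show ?thesis .
qed

lemma residual_sq_le:
  assumes j: "j \<in> {1..n}"
  shows "(residual j u)^2 \<le> \<rho>^2 * (hinge n \<kappa> j u)^2 + (2 + 2 * D / \<Delta>)^2 * \<sigma> * \<bar>u\<bar>^3 / \<Delta>"
proof (cases "\<bar>u\<bar> \<le> \<Delta> / \<sigma>")
  case True
  then show ?thesis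
    using residual_near[OF j True] \<sigma>_pos gridDelta_pos by (simp add: power_mult_distrib)
next
  case False
  then show ?thesis
    using residual_sq_far[OF j, of u] by (simp add: add_increasing)
qed

lemma residual_sq_local_ge:
  assumes j: "j \<in> {1..n}"
  shows "(hinge n \<kappa> j u)^2 - \<sigma> * \<bar>u\<bar>^3 / \<Delta> \<le> indicator {-(\<Delta> / \<sigma>) ..< \<Delta> / \<sigma>} u * (residual j u)^2"
proof (cases "- (\<Delta> / \<sigma>) \<le> u \<and> u < \<Delta> / \<sigma>")
  case True
  then have "\<bar>u\<bar> \<le> \<Delta> / \<sigma>"
    by auto
  then have "(residual j u)^2 = \<rho>^2 * (hinge n \<kappa> j u)^2"
    using residual_near[OF j] by (simp add: power_mult_distrib)
  moreover have "1 \<le> \<rho>^2"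
    using \<rho>_ge_1 by (simp add: one_le_power)
  ultimately have "(hinge n \<kappa> j u)^2 \<le> (residual j u)^2"
    by (simp add: mult_le_cancel_right1)
  moreover have "0 \<le> \<sigma> * \<bar>u\<bar>^3 / \<Delta>"
    using \<sigma>_pos gridDelta_pos by simp
  ultimately show ?thesis
    using True by (simp add: indicator_def)
next
  case False
  then have "\<Delta> / \<sigma> \<le> \<bar>u\<bar>"
    by auto
  then have u_ge: "\<Delta> \<le> \<sigma> * \<bar>u\<bar>"
    using \<sigma>_pos by (simp add: field_simps)
  have "(hinge n \<kappa> j u)^2 \<le> u^2"
    using abs_hinge_le[OF \<kappa>_pos] by (simp add: abs_le_square_iff)
  also have "\<dots> = u^2 * 1"
    by simp
  also have "\<dots> \<le> u^2 * (\<sigma> * \<bar>u\<bar> / \<Delta>)"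
    using u_ge gridDelta_pos by (intro mult_left_mono) (auto simp: field_simps)
  also have "\<dots> = \<sigma> * \<bar>u\<bar>^3 / \<Delta>"
    by (simp add: power2_eq_square power3_eq_cube)
  finally show ?thesis
    using False unfolding indicator_def by auto
qed

lemma abs_residual_near_le:
  assumes j: "j \<in> {1..n}" and u: "\<bar>u\<bar> \<le> \<Delta> / \<sigma>"
  shows "\<bar>residual j u\<bar> \<le> \<Delta> / \<sigma>"
proof -
  have "\<kappa> \<le> \<Delta> / \<sigma>"
    using \<kappa>\<sigma>_less \<sigma>_pos by (simp add: field_simps)
  then have "\<bar>hinge n \<kappa> j u\<bar> \<le> \<Delta> / \<sigma> - \<kappa>"
    using u \<kappa>_pos unfolding hinge_def by auto
  then have "\<rho> * \<bar>hinge n \<kappa> j u\<bar> \<le> \<rho> * (\<Delta> / \<sigma> - \<kappa>)"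
    using \<rho>_ge_1 by (intro mult_left_mono) auto
  also have "\<dots> = \<Delta> / \<sigma>"
    unfolding \<rho>_def using \<kappa>\<sigma>_less \<sigma>_pos by (simp add: field_simps)
  finally show ?thesis
    using residual_near[OF j u] \<rho>_ge_1 by (simp add: abs_mult)
qed

section \<open>The score of the Gaussian mixture\<close>

definition component :: "nat \<Rightarrow> real \<Rightarrow> real" where
  "component k x = pN (x - ypt n D k) \<sigma>"

definition mixture :: "real \<Rightarrow> real" where
  "mixture x = (\<Sum>k=1..n. component k x)"

definition mixture_score :: "real \<Rightarrow> real" where
  "mixture_score x = (\<Sum>k=1..n. component k x * ((ypt n D k - x) / \<sigma>^2)) / mixture x"

definition far_density :: "nat \<Rightarrow> real \<Rightarrow> real" where
  "far_density i x = (if \<Delta> \<le> \<bar>x - ypt n D i\<bar> then component i x else 0)"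

lemma component_pos: "0 < component k x"
  unfolding component_def using pN_pos[OF \<sigma>_pos] .

lemma far_density_nonneg: "0 \<le> far_density i x"
  unfolding far_density_def using component_pos by (simp add: less_imp_le)

lemma mixture_pos: "0 < mixture x"
  unfolding mixture_def using two_le_n component_pos by (intro sum_pos) auto

lemma pt_eq_mixture: "pt n D (\<sigma>^2) x = mixture x / real n"
  unfolding pt_def mixture_def component_def using \<sigma>_pos by simp

lemma deriv_ln_pt: "deriv (\<lambda>u. ln (pt n D (\<sigma>^2) u)) x = mixture_score x"
proof -
  have "(mixture has_real_derivative (\<Sum>k=1..n. component k x * ((ypt n D k - x) / \<sigma>^2))) (at x)"
    unfolding mixture_def[abs_def] component_def by (intro DERIV_sum has_real_derivative_pN[OF \<sigma>_pos])
  from DERIV_chain2[OF DERIV_ln DERIV_cdivide[OF this, of "real n"]]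
  have "((\<lambda>u. ln (mixture u / real n)) has_real_derivative
      inverse (mixture x / real n) * ((\<Sum>k=1..n. component k x * ((ypt n D k - x) / \<sigma>^2)) / real n)) (at x)"
    using mixture_pos two_le_n by simp
  moreover have "inverse (mixture x / real n) * ((\<Sum>k=1..n. component k x * ((ypt n D k - x) / \<sigma>^2)) / real n)
      = mixture_score x"
    unfolding mixture_score_def using two_le_n mixture_pos[of x] by (simp add: field_simps)
  ultimately show ?thesis
    unfolding pt_eq_mixture by (intro DERIV_imp_deriv) simp
qed

lemma mixture_loss_le:
  "(f - mixture_score x)^2 * pt n D (\<sigma>^2) x \<le>
     (1 / real n) * (\<Sum>k=1..n. (f - (ypt n D k - x) / \<sigma>^2)^2 * component k x)"
proof -
  have weighted_mean: "(\<Sum>k=1..n. component k x * (f - (ypt n D k - x) / \<sigma>^2)) = mixture x * (f - mixture_score x)"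
  proof -
    have "(\<Sum>k=1..n. component k x * (f - (ypt n D k - x) / \<sigma>^2))
       = f * mixture x - (\<Sum>k=1..n. component k x * ((ypt n D k - x) / \<sigma>^2))"
      unfolding mixture_def by (simp add: algebra_simps sum_subtractf sum_distrib_left)
    also have "\<dots> = mixture x * (f - mixture_score x)"
      unfolding mixture_score_def using mixture_pos[of x] by (simp add: field_simps)
    finally show ?thesis .
  qed
  have "(mixture x * (f - mixture_score x))^2
      \<le> mixture x * (\<Sum>k=1..n. component k x * (f - (ypt n D k - x) / \<sigma>^2)^2)"
    using weighted_sum_square_le[of "{1..n}" "\<lambda>k. component k x" "\<lambda>k. f - (ypt n D k - x) / \<sigma>^2"] component_pos
    unfolding weighted_mean mixture_def by (simp add: less_imp_le)
  then have "mixture x * (f - mixture_score x)^2 \<le> (\<Sum>k=1..n. component k x * (f - (ypt n D k - x) / \<sigma>^2)^2)"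
    using mixture_pos[of x] by (simp add: power_mult_distrib power2_eq_square mult_ac)
  then show ?thesis
    unfolding pt_eq_mixture using two_le_n by (simp add: divide_right_mono mult.commute divide_simps)
qed

text \<open>Near \<open>y\<^sub>j\<close> all other points are at distance at least \<open>\<Delta>\<close>, so the mixture score
  differs from the score of the \<open>j\<close>-th component only by a multiple of the far densities.\<close>

lemma mixture_loss_ge:
  assumes j: "j \<in> {1..n}" and x: "ypt n D j - \<Delta> \<le> x" "x < ypt n D j + \<Delta>"
    and f: "\<bar>f - (ypt n D j - x) / \<sigma>^2\<bar> \<le> \<Delta> / \<sigma>^2"
  shows "(f - (ypt n D j - x) / \<sigma>^2)^2 * component j x / real n - 4 * D * \<Delta> / \<sigma>^4 * (\<Sum>i=1..n. far_density i x)
           \<le> (f - mixture_score x)^2 * pt n D (\<sigma>^2) x"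
proof -
  define G where "G = mixture x"
  define T where "T = (\<Sum>i=1..n. far_density i x)"
  define r where "r k = (ypt n D k - x) / \<sigma>^2" for k
  define a where "a = f - r j"
  define e where "e = mixture_score x - r j"
  have G_pos: "0 < G"
    unfolding G_def by (rule mixture_pos)
  have T_nonneg: "0 \<le> T"
    unfolding T_def by (intro sum_nonneg far_density_nonneg)
  have "e * G = (\<Sum>i=1..n. component i x * (r i - r j))"
  proof -
    have "(\<Sum>i=1..n. component i x * (r i - r j)) = (\<Sum>i=1..n. component i x * r i) - r j * G"
      unfolding G_def mixture_def by (simp add: algebra_simps sum_subtractf sum_distrib_left)
    also have "\<dots> = e * G"
      unfolding e_def mixture_score_def r_def G_def[symmetric] using G_pos by (simp add: field_simps)
    finally show ?thesis by simp
  qed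
  also have "\<bar>\<dots>\<bar> \<le> (\<Sum>i=1..n. \<bar>component i x * (r i - r j)\<bar>)"
    by (rule sum_abs)
  also have "\<dots> \<le> (\<Sum>i=1..n. 2 * D / \<sigma>^2 * far_density i x)"
  proof (rule sum_mono)
    fix i assume i: "i \<in> {1..n}"
    show "\<bar>component i x * (r i - r j)\<bar> \<le> 2 * D / \<sigma>^2 * far_density i x"
    proof (cases "i = j")
      case False
      have "\<bar>r i - r j\<bar> = \<bar>ypt n D i - ypt n D j\<bar> / \<sigma>^2"
        unfolding r_def by (simp add: diff_divide_distrib[symmetric])
      also have "\<dots> \<le> 2 * D / \<sigma>^2"
        using abs_ypt_le[OF i] abs_ypt_le[OF j] by (intro divide_right_mono) auto
      finally have "component i x * \<bar>r i - r j\<bar> \<le> component i x * (2 * D / \<sigma>^2)"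
        using component_pos[of i x] by (intro mult_left_mono) auto
      then show ?thesis
        using far_from_other_ypt[OF x False] component_pos[of i x]
        unfolding far_density_def by (simp add: abs_mult mult.commute)
    qed (simp add: far_density_nonneg D_pos less_imp_le)
  qed
  also have "\<dots> = 2 * D / \<sigma>^2 * T"
    unfolding T_def by (simp add: sum_distrib_left)
  finally have eG: "\<bar>e\<bar> * G \<le> 2 * D / \<sigma>^2 * T"
    using G_pos by (simp add: abs_mult)
  have "(a - e)^2 = a^2 - 2 * (a * e) + e^2"
    by (simp add: power2_eq_square algebra_simps)
  then have "a^2 - 2 * \<bar>a\<bar> * \<bar>e\<bar> \<le> (a - e)^2"
    using abs_ge_self[of "a * e"] zero_le_power2[of e] unfolding abs_mult by linarith
  then have "(a^2 - 2 * \<bar>a\<bar> * \<bar>e\<bar>) * G \<le> (f - mixture_score x)^2 * G"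
    unfolding a_def e_def using G_pos by (intro mult_right_mono) auto
  moreover have "a^2 * component j x \<le> a^2 * G"
    unfolding G_def mixture_def using j component_pos
    by (intro mult_left_mono member_le_sum) (auto simp: less_imp_le)
  moreover have "\<bar>a\<bar> \<le> \<Delta> / \<sigma>^2"
    using f unfolding a_def r_def .
  then have "\<bar>a\<bar> * (\<bar>e\<bar> * G) \<le> (\<Delta> / \<sigma>^2) * (2 * D / \<sigma>^2 * T)"
    by (rule mult_mono[OF _ eG]) (use gridDelta_pos G_pos in auto)
  moreover have "(\<Delta> / \<sigma>^2) * (2 * D / \<sigma>^2 * T) = 2 * D * \<Delta> / \<sigma>^4 * T"
    by (simp add: power2_eq_square power4_eq_xxxx mult_ac)
  moreover have "(a^2 - 2 * \<bar>a\<bar> * \<bar>e\<bar>) * G = a^2 * G - 2 * (\<bar>a\<bar> * (\<bar>e\<bar> * G))"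
    by (simp add: algebra_simps)
  ultimately have "a^2 * component j x - 2 * (2 * D * \<Delta> / \<sigma>^4 * T) \<le> (f - mixture_score x)^2 * G"
    by linarith
  then have "a^2 * component j x - 4 * D * \<Delta> / \<sigma>^4 * T \<le> (f - mixture_score x)^2 * G"
    by simp
  then have "(a^2 * component j x - 4 * D * \<Delta> / \<sigma>^4 * T) / real n \<le> (f - mixture_score x)^2 * pt n D (\<sigma>^2) x"
    unfolding pt_eq_mixture G_def using two_le_n by (simp add: divide_right_mono)
  moreover have "4 * D * \<Delta> / \<sigma>^4 * T / real n \<le> 4 * D * \<Delta> / \<sigma>^4 * T"
    using T_nonneg D_pos gridDelta_pos \<sigma>_pos two_le_n by (simp add: divide_le_eq mult_le_cancel_left1)
  ultimately show ?thesis
    unfolding a_def r_def T_def by (simp add: diff_divide_distrib)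
qed

definition component_loss :: "nat \<Rightarrow> real \<Rightarrow> real" where
  "component_loss j x = (s_hat x - (ypt n D j - x) / \<sigma>^2)^2 * component j x"

definition local_component_loss :: "nat \<Rightarrow> real \<Rightarrow> real" where
  "local_component_loss j x = indicator {ypt n D j - \<Delta> ..< ypt n D j + \<Delta>} x * component_loss j x"

lemma residual_sq_pN_le:
  assumes j: "j \<in> {1..n}"
  shows "(residual j u)^2 * pN u 1
    \<le> \<rho>^2 * ((hinge n \<kappa> j u)^2 * pN u 1) + (2 + 2 * D / \<Delta>)^2 * \<sigma> / \<Delta> * (\<bar>u\<bar>^3 * pN u 1)"
proof -
  have "(residual j u)^2 * pN u 1
      \<le> (\<rho>^2 * (hinge n \<kappa> j u)^2 + (2 + 2 * D / \<Delta>)^2 * \<sigma> * \<bar>u\<bar>^3 / \<Delta>) * pN u 1"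
    using residual_sq_le[OF j, of u] pN_pos[of 1 u] by (intro mult_right_mono) auto
  then show ?thesis
    by (simp add: algebra_simps)
qed

lemma integrable_residual_sq:
  assumes j: "j \<in> {1..n}"
  shows "integrable lborel (\<lambda>u. (residual j u)^2 * pN u 1)"
proof (rule Bochner_Integration.integrable_bound)
  show "integrable lborel (\<lambda>u. \<rho>^2 * ((hinge n \<kappa> j u)^2 * pN u 1)
      + (2 + 2 * D / \<Delta>)^2 * \<sigma> / \<Delta> * (\<bar>u\<bar>^3 * pN u 1))"
    by (intro Bochner_Integration.integrable_add integrable_mult_right integrable_hinge_sq[OF \<kappa>_pos]
        integrable_abs_cube_pN)
  have "norm ((residual j u)^2 * pN u 1) \<le> norm (\<rho>^2 * ((hinge n \<kappa> j u)^2 * pN u 1)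
      + (2 + 2 * D / \<Delta>)^2 * \<sigma> / \<Delta> * (\<bar>u\<bar>^3 * pN u 1))" for u
  proof -
    have "0 \<le> (residual j u)^2 * pN u 1"
      using pN_pos[of 1 u] by simp
    then show ?thesis
      using residual_sq_pN_le[OF j, of u] unfolding real_norm_def by arith
  qed
  then show "AE u in lborel. norm ((residual j u)^2 * pN u 1) \<le> norm (\<rho>^2 * ((hinge n \<kappa> j u)^2 * pN u 1)
      + (2 + 2 * D / \<Delta>)^2 * \<sigma> / \<Delta> * (\<bar>u\<bar>^3 * pN u 1))"
    by simp
qed measurable

lemma integral_residual_sq_le:
  assumes j: "j \<in> {1..n}"
  shows "(\<integral>u. (residual j u)^2 * pN u 1 \<partial>lborel)
     \<le> \<rho>^2 * ((of_bool (j < n) + of_bool (1 < j)) * (Fk \<kappa> / 2))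
       + (2 + 2 * D / \<Delta>)^2 * \<sigma> / \<Delta> * (2 * sqrt (2 / pi))"
proof -
  have "(\<integral>u. (residual j u)^2 * pN u 1 \<partial>lborel) \<le> (\<integral>u. \<rho>^2 * ((hinge n \<kappa> j u)^2 * pN u 1)
      + (2 + 2 * D / \<Delta>)^2 * \<sigma> / \<Delta> * (\<bar>u\<bar>^3 * pN u 1) \<partial>lborel)"
    by (intro integral_mono integrable_residual_sq[OF j] residual_sq_pN_le[OF j]
        Bochner_Integration.integrable_add integrable_mult_right integrable_hinge_sq[OF \<kappa>_pos]
        integrable_abs_cube_pN)
  also have "\<dots> = \<rho>^2 * ((of_bool (j < n) + of_bool (1 < j)) * (Fk \<kappa> / 2))
       + (2 + 2 * D / \<Delta>)^2 * \<sigma> / \<Delta> * (2 * sqrt (2 / pi))"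
    using has_bochner_integral_hinge_sq[OF \<kappa>_pos, of n j] has_bochner_integral_abs_cube_pN
    by (intro has_bochner_integral_integral_eq has_bochner_integral_add has_bochner_integral_mult_right)
  finally show ?thesis .
qed

lemma residual_sq_pN_local_ge:
  assumes j: "j \<in> {1..n}"
  shows "(hinge n \<kappa> j u)^2 * pN u 1 - \<sigma> / \<Delta> * (\<bar>u\<bar>^3 * pN u 1)
    \<le> indicator {-(\<Delta> / \<sigma>) ..< \<Delta> / \<sigma>} u * (residual j u)^2 * pN u 1"
proof -
  have "((hinge n \<kappa> j u)^2 - \<sigma> * \<bar>u\<bar>^3 / \<Delta>) * pN u 1
      \<le> indicator {-(\<Delta> / \<sigma>) ..< \<Delta> / \<sigma>} u * (residual j u)^2 * pN u 1"
    using residual_sq_local_ge[OF j, of u] pN_pos[of 1 u] by (intro mult_right_mono) auto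
  then show ?thesis
    by (simp add: algebra_simps)
qed

lemma integrable_local_residual_sq:
  assumes j: "j \<in> {1..n}"
  shows "integrable lborel (\<lambda>u. indicator {-(\<Delta> / \<sigma>) ..< \<Delta> / \<sigma>} u * (residual j u)^2 * pN u 1)"
proof (rule Bochner_Integration.integrable_bound[OF integrable_residual_sq[OF j]])
  show "AE u in lborel. norm (indicator {-(\<Delta> / \<sigma>) ..< \<Delta> / \<sigma>} u * (residual j u)^2 * pN u 1)
      \<le> norm ((residual j u)^2 * pN u 1)"
    using pN_pos[of 1] by (intro AE_I2) (auto simp: indicator_def abs_mult)
qed measurable

lemma integral_local_residual_sq_ge:
  assumes j: "j \<in> {1..n}"
  shows "(of_bool (j < n) + of_bool (1 < j)) * (Fk \<kappa> / 2) - \<sigma> / \<Delta> * (2 * sqrt (2 / pi))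
    \<le> (\<integral>u. indicator {-(\<Delta> / \<sigma>) ..< \<Delta> / \<sigma>} u * (residual j u)^2 * pN u 1 \<partial>lborel)"
proof -
  have "(of_bool (j < n) + of_bool (1 < j)) * (Fk \<kappa> / 2) - \<sigma> / \<Delta> * (2 * sqrt (2 / pi))
      = (\<integral>u. (hinge n \<kappa> j u)^2 * pN u 1 - \<sigma> / \<Delta> * (\<bar>u\<bar>^3 * pN u 1) \<partial>lborel)"
    using has_bochner_integral_hinge_sq[OF \<kappa>_pos, of n j] has_bochner_integral_abs_cube_pN
    by (intro has_bochner_integral_integral_eq[symmetric] has_bochner_integral_diff has_bochner_integral_mult_right)
  also have "\<dots> \<le> (\<integral>u. indicator {-(\<Delta> / \<sigma>) ..< \<Delta> / \<sigma>} u * (residual j u)^2 * pN u 1 \<partial>lborel)"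
    by (intro integral_mono integrable_local_residual_sq[OF j] residual_sq_pN_local_ge[OF j]
        Bochner_Integration.integrable_diff integrable_mult_right integrable_hinge_sq[OF \<kappa>_pos]
        integrable_abs_cube_pN)
  finally show ?thesis .
qed

lemma has_bochner_integral_component_loss:
  assumes j: "j \<in> {1..n}"
  shows "has_bochner_integral lborel (component_loss j) ((\<integral>u. (residual j u)^2 * pN u 1 \<partial>lborel) / \<sigma>^2)"
proof -
  define H where "H x = (residual j ((x - ypt n D j) / \<sigma>) / \<sigma>)^2" for x
  have "H (ypt n D j + \<sigma> * u) * pN u 1 = (1 / \<sigma>^2) * ((residual j u)^2 * pN u 1)" for u
    unfolding H_def using \<sigma>_pos by (simp add: power_divide)
  then have "has_bochner_integral lborel (\<lambda>u. H (ypt n D j + \<sigma> * u) * pN u 1)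
      ((\<integral>u. (residual j u)^2 * pN u 1 \<partial>lborel) / \<sigma>^2)"
    using has_bochner_integral_mult_right[OF has_bochner_integral_integrable[OF integrable_residual_sq[OF j]],
        of "1 / \<sigma>^2"] by simp
  then have "has_bochner_integral lborel (\<lambda>x. H x * pN (x - ypt n D j) \<sigma>)
      ((\<integral>u. (residual j u)^2 * pN u 1 \<partial>lborel) / \<sigma>^2)"
    by (rule has_bochner_integral_pN_rescale[OF \<sigma>_pos])
  moreover have "component_loss j = (\<lambda>x. H x * pN (x - ypt n D j) \<sigma>)"
    unfolding component_loss_def[abs_def] component_def H_def residual_eq ..
  ultimately show ?thesis
    by simp
qed

lemma integrable_component_loss: "j \<in> {1..n} \<Longrightarrow> integrable lborel (component_loss j)"
  using has_bochner_integral_component_loss by (simp add: has_bochner_integral_iff)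

lemma has_bochner_integral_local_component_loss:
  assumes j: "j \<in> {1..n}"
  shows "has_bochner_integral lborel (local_component_loss j)
    ((\<integral>u. indicator {-(\<Delta> / \<sigma>) ..< \<Delta> / \<sigma>} u * (residual j u)^2 * pN u 1 \<partial>lborel) / \<sigma>^2)"
proof -
  define H where "H x = indicator {ypt n D j - \<Delta> ..< ypt n D j + \<Delta>} x
    * (residual j ((x - ypt n D j) / \<sigma>) / \<sigma>)^2" for x
  have "indicator {ypt n D j - \<Delta> ..< ypt n D j + \<Delta>} (ypt n D j + \<sigma> * u)
      = (indicator {-(\<Delta> / \<sigma>) ..< \<Delta> / \<sigma>} u :: real)" for u
    using \<sigma>_pos by (simp add: indicator_def field_simps)
  then have "H (ypt n D j + \<sigma> * u) * pN u 1
      = (1 / \<sigma>^2) * (indicator {-(\<Delta> / \<sigma>) ..< \<Delta> / \<sigma>} u * (residual j u)^2 * pN u 1)" for u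
    unfolding H_def using \<sigma>_pos by (simp add: power_divide)
  then have "has_bochner_integral lborel (\<lambda>u. H (ypt n D j + \<sigma> * u) * pN u 1)
      ((\<integral>u. indicator {-(\<Delta> / \<sigma>) ..< \<Delta> / \<sigma>} u * (residual j u)^2 * pN u 1 \<partial>lborel) / \<sigma>^2)"
    using has_bochner_integral_mult_right[OF
        has_bochner_integral_integrable[OF integrable_local_residual_sq[OF j]], of "1 / \<sigma>^2"] by simp
  then have "has_bochner_integral lborel (\<lambda>x. H x * pN (x - ypt n D j) \<sigma>)
      ((\<integral>u. indicator {-(\<Delta> / \<sigma>) ..< \<Delta> / \<sigma>} u * (residual j u)^2 * pN u 1 \<partial>lborel) / \<sigma>^2)"
    by (rule has_bochner_integral_pN_rescale[OF \<sigma>_pos])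
  moreover have "local_component_loss j = (\<lambda>x. H x * pN (x - ypt n D j) \<sigma>)"
    unfolding local_component_loss_def[abs_def] component_loss_def component_def H_def residual_eq
    by (simp add: mult.assoc)
  ultimately show ?thesis
    by simp
qed

text \<open>A Chebyshev-type bound through the third absolute moment.\<close>

lemma far_density_integral:
  shows "integrable lborel (far_density i)"
    and "(\<integral>x. far_density i x \<partial>lborel) \<le> \<sigma>^3 / \<Delta>^3 * (2 * sqrt (2 / pi))"
proof -
  define H where "H x = (if \<Delta> \<le> \<bar>x - ypt n D i\<bar> then 1 else 0 :: real)" for x
  define g where "g u = (if \<Delta> \<le> \<sigma> * \<bar>u\<bar> then pN u 1 else 0)" for u
  have H_shift: "H (ypt n D i + \<sigma> * u) * pN u 1 = g u" for u
    unfolding H_def g_def using \<sigma>_pos by (simp add: abs_mult)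
  have g_le: "g u \<le> \<sigma>^3 / \<Delta>^3 * (\<bar>u\<bar>^3 * pN u 1)" for u
  proof (cases "\<Delta> \<le> \<sigma> * \<bar>u\<bar>")
    case True
    then have "\<Delta>^3 \<le> (\<sigma> * \<bar>u\<bar>)^3"
      using gridDelta_pos by (intro power_mono) auto
    then have "1 \<le> \<sigma>^3 / \<Delta>^3 * \<bar>u\<bar>^3"
      using gridDelta_pos by (simp add: field_simps power_mult_distrib)
    then have "1 * pN u 1 \<le> \<sigma>^3 / \<Delta>^3 * \<bar>u\<bar>^3 * pN u 1"
      using pN_pos[of 1 u] by (intro mult_right_mono) auto
    then show ?thesis
      unfolding g_def using True by simp
  next
    case False
    then show ?thesis
      unfolding g_def using pN_pos[of 1 u] \<sigma>_pos gridDelta_pos by simp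
  qed
  have g_integrable: "integrable lborel g"
  proof (rule Bochner_Integration.integrable_bound)
    show "integrable lborel (\<lambda>u. pN u 1)"
      unfolding pN_std_normal by simp
    show "AE u in lborel. norm (g u) \<le> norm (pN u 1)"
      unfolding g_def using pN_pos[of 1] by (intro AE_I2) auto
  qed (unfold g_def, measurable)
  have far_density_eq: "far_density i = (\<lambda>x. H x * pN (x - ypt n D i) \<sigma>)"
    unfolding far_density_def[abs_def] component_def H_def by auto
  have "has_bochner_integral lborel (far_density i) (integral\<^sup>L lborel g)"
    unfolding far_density_eq
    by (rule has_bochner_integral_pN_rescale[OF \<sigma>_pos]) (simp add: H_shift has_bochner_integral_integrable[OF g_integrable])
  moreover have "integral\<^sup>L lborel g \<le> (\<integral>u. \<sigma>^3 / \<Delta>^3 * (\<bar>u\<bar>^3 * pN u 1) \<partial>lborel)"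
    by (intro integral_mono g_integrable g_le integrable_mult_right integrable_abs_cube_pN)
  ultimately show "integrable lborel (far_density i)"
    and "(\<integral>x. far_density i x \<partial>lborel) \<le> \<sigma>^3 / \<Delta>^3 * (2 * sqrt (2 / pi))"
    by (simp_all add: has_bochner_integral_iff integral_abs_cube_pN)
qed

section \<open>Bounds on the loss\<close>

definition loss_density :: "real \<Rightarrow> real" where
  "loss_density x = (s_hat x - mixture_score x)^2 * pt n D (\<sigma>^2) x"

lemma Lt_eq_integral_loss_density: "Lt n D (\<sigma>^2) s_hat = \<sigma>^2 * (\<integral>x. loss_density x \<partial>lborel)"
  unfolding Lt_def loss_density_def deriv_ln_pt ..

lemma loss_density_nonneg: "0 \<le> loss_density x"
  unfolding loss_density_def pt_eq_mixture using mixture_pos[of x] by simp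

lemma loss_density_le: "loss_density x \<le> (1 / real n) * (\<Sum>j=1..n. component_loss j x)"
  unfolding loss_density_def component_loss_def by (rule mixture_loss_le)

lemma integrable_loss_density: "integrable lborel loss_density"
proof (rule Bochner_Integration.integrable_bound)
  show "integrable lborel (\<lambda>x. (1 / real n) * (\<Sum>j=1..n. component_loss j x))"
    by (intro integrable_mult_right Bochner_Integration.integrable_sum integrable_component_loss)
  show "AE x in lborel. norm (loss_density x) \<le> norm ((1 / real n) * (\<Sum>j=1..n. component_loss j x))"
    using loss_density_le loss_density_nonneg unfolding real_norm_def by (intro AE_I2) (smt (verit))
qed (unfold loss_density_def mixture_score_def mixture_def component_def pt_def, measurable)

lemma Lt_le:
  "Lt n D (\<sigma>^2) s_hat \<le> \<rho>^2 * (real n - 1) / real n * Fk \<kappa> + (2 + 2 * D / \<Delta>)^2 * \<sigma> / \<Delta> * (2 * sqrt (2 / pi))"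
proof -
  define E where "E = (2 + 2 * D / \<Delta>)^2 * \<sigma> / \<Delta> * (2 * sqrt (2 / pi))"
  have sum_split: "(\<Sum>j=1..n. (\<rho>^2 * (c j * (Fk \<kappa> / 2)) + E) / \<sigma>^2)
      = (\<rho>^2 * (Fk \<kappa> / 2) * (\<Sum>j=1..n. c j) + real n * E) / \<sigma>^2" for c :: "nat \<Rightarrow> real"
    unfolding sum_divide_distrib[symmetric] sum.distrib by (simp add: sum_distrib_left sum_distrib_right mult_ac)
  have "(\<integral>x. loss_density x \<partial>lborel) \<le> (\<integral>x. (1 / real n) * (\<Sum>j=1..n. component_loss j x) \<partial>lborel)"
    by (intro integral_mono integrable_loss_density loss_density_le integrable_mult_right
        Bochner_Integration.integrable_sum integrable_component_loss)
  also have "\<dots> = (1 / real n) * (\<Sum>j=1..n. (\<integral>x. component_loss j x \<partial>lborel))"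
    by (simp add: integrable_component_loss)
  also have "\<dots> = (1 / real n) * (\<Sum>j=1..n. (\<integral>u. (residual j u)^2 * pN u 1 \<partial>lborel) / \<sigma>^2)"
    using has_bochner_integral_component_loss by (auto intro!: sum.cong simp: has_bochner_integral_iff)
  also have "\<dots> \<le> (1 / real n) * (\<Sum>j=1..n. (\<rho>^2 * ((of_bool (j < n) + of_bool (1 < j)) * (Fk \<kappa> / 2)) + E) / \<sigma>^2)"
    unfolding E_def using integral_residual_sq_le
    by (intro mult_left_mono sum_mono divide_right_mono) auto
  also have "\<dots> = (\<rho>^2 * (real n - 1) / real n * Fk \<kappa> + E) / \<sigma>^2"
    unfolding sum_split sum_neighbour_count[OF two_le_n] using two_le_n \<sigma>_pos by (simp add: field_simps)
  finally show ?thesis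
    unfolding Lt_eq_integral_loss_density E_def[symmetric] using \<sigma>_pos by (simp add: field_simps)
qed

lemma loss_density_ge:
  "(1 / real n) * (\<Sum>j=1..n. local_component_loss j x) - 4 * D * \<Delta> / \<sigma>^4 * (\<Sum>i=1..n. far_density i x)
    \<le> loss_density x"
proof (cases "\<exists>j\<in>{1..n}. ypt n D j - \<Delta> \<le> x \<and> x < ypt n D j + \<Delta>")
  case True
  then obtain j where j: "j \<in> {1..n}" and x: "ypt n D j - \<Delta> \<le> x" "x < ypt n D j + \<Delta>"
    by blast
  have "local_component_loss k x = 0" if "k \<in> {1..n} - {j}" for k
    using ypt_neighbourhood_unique[OF x, of k] that unfolding local_component_loss_def by (auto simp: indicator_def)
  then have "(\<Sum>k=1..n. local_component_loss k x) = local_component_loss j x"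
    using j by (simp add: sum.remove)
  also have "\<dots> = (s_hat x - (ypt n D j - x) / \<sigma>^2)^2 * component j x"
    using x unfolding local_component_loss_def component_loss_def by (simp add: indicator_def)
  finally have sum_eq: "(\<Sum>k=1..n. local_component_loss k x) = (s_hat x - (ypt n D j - x) / \<sigma>^2)^2 * component j x" .
  have "\<bar>(x - ypt n D j) / \<sigma>\<bar> \<le> \<Delta> / \<sigma>"
    using x \<sigma>_pos by (auto simp: abs_le_iff divide_right_mono)
  then have "\<bar>residual j ((x - ypt n D j) / \<sigma>)\<bar> / \<sigma> \<le> \<Delta> / \<sigma> / \<sigma>"
    using abs_residual_near_le[OF j] \<sigma>_pos by (intro divide_right_mono) auto
  then have "\<bar>residual j ((x - ypt n D j) / \<sigma>) / \<sigma>\<bar> \<le> \<Delta> / \<sigma> / \<sigma>"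
    using \<sigma>_pos by simp
  then have "\<bar>s_hat x - (ypt n D j - x) / \<sigma>^2\<bar> \<le> \<Delta> / \<sigma>^2"
    unfolding residual_eq by (simp add: power2_eq_square)
  from mixture_loss_ge[OF j x this] show ?thesis
    unfolding sum_eq loss_density_def by simp
next
  case False
  then have "local_component_loss k x = 0" if "k \<in> {1..n}" for k
    using that unfolding local_component_loss_def by (auto simp: indicator_def)
  moreover have "0 \<le> 4 * D * \<Delta> / \<sigma>^4 * (\<Sum>i=1..n. far_density i x)"
    using D_pos gridDelta_pos \<sigma>_pos far_density_nonneg by (simp add: sum_nonneg)
  ultimately show ?thesis
    using loss_density_nonneg[of x] by simp
qed

lemma Lt_ge:
  "(real n - 1) / real n * Fk \<kappa> - \<sigma> / \<Delta> * (2 * sqrt (2 / pi)) - 4 * D * real n * \<sigma> / \<Delta>^2 * (2 * sqrt (2 / pi))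
    \<le> Lt n D (\<sigma>^2) s_hat"
proof -
  define M where "M = 2 * sqrt (2 / pi)"
  define c where "c = 4 * D * \<Delta> / \<sigma>^4"
  have c_nonneg: "0 \<le> c"
    unfolding c_def using D_pos gridDelta_pos by simp
  have local_integrable: "integrable lborel (local_component_loss j)" if "j \<in> {1..n}" for j
    using has_bochner_integral_local_component_loss[OF that] by (simp add: has_bochner_integral_iff)
  have local_integral: "((of_bool (j < n) + of_bool (1 < j)) * (Fk \<kappa> / 2) - \<sigma> / \<Delta> * M) / \<sigma>^2
      \<le> (\<integral>x. local_component_loss j x \<partial>lborel)" if "j \<in> {1..n}" for j
    using has_bochner_integral_local_component_loss[OF that] integral_local_residual_sq_ge[OF that] \<sigma>_pos
    unfolding M_def by (simp add: has_bochner_integral_iff divide_right_mono)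
  have sum_split: "(\<Sum>j=1..n. (a j * (Fk \<kappa> / 2) - \<sigma> / \<Delta> * M) / \<sigma>^2)
      = ((Fk \<kappa> / 2) * (\<Sum>j=1..n. a j) - real n * (\<sigma> / \<Delta> * M)) / \<sigma>^2" for a :: "nat \<Rightarrow> real"
    unfolding sum_divide_distrib[symmetric] sum_subtractf by (simp add: sum_distrib_left sum_distrib_right mult_ac)
  have "((real n - 1) / real n * Fk \<kappa> - \<sigma> / \<Delta> * M - 4 * D * real n * \<sigma> / \<Delta>^2 * M) / \<sigma>^2
      = (1 / real n) * (\<Sum>j=1..n. ((of_bool (j < n) + of_bool (1 < j)) * (Fk \<kappa> / 2) - \<sigma> / \<Delta> * M) / \<sigma>^2)
        - c * (\<Sum>i=1..n. \<sigma>^3 / \<Delta>^3 * M)"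
    unfolding sum_split sum_neighbour_count[OF two_le_n] c_def
    using two_le_n \<sigma>_pos gridDelta_pos by (simp add: field_simps power_def)
  also have "\<dots> \<le> (1 / real n) * (\<Sum>j=1..n. (\<integral>x. local_component_loss j x \<partial>lborel))
        - c * (\<Sum>i=1..n. (\<integral>x. far_density i x \<partial>lborel))"
    using local_integral far_density_integral(2) c_nonneg unfolding M_def
    by (intro diff_mono mult_left_mono sum_mono) auto
  also have "\<dots> = (\<integral>x. (1 / real n) * (\<Sum>j=1..n. local_component_loss j x) - c * (\<Sum>i=1..n. far_density i x) \<partial>lborel)"
    using local_integrable far_density_integral(1)
    by (subst Bochner_Integration.integral_diff)
       (auto intro!: integrable_mult_right Bochner_Integration.integrable_sum simp: integral_sum)
  also have "\<dots> \<le> (\<integral>x. loss_density x \<partial>lborel)"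
    using local_integrable far_density_integral(1) loss_density_ge unfolding c_def
    by (intro integral_mono integrable_loss_density Bochner_Integration.integrable_diff integrable_mult_right
        Bochner_Integration.integrable_sum) auto
  finally show ?thesis
    unfolding Lt_eq_integral_loss_density M_def[symmetric] using \<sigma>_pos by (simp add: field_simps)
qed

lemma abs_Lt_deviation_le:
  "\<bar>Lt n D (\<sigma>^2) s_hat - (real n - 1) / real n * Fk \<kappa>\<bar>
    \<le> (6 * \<kappa> * Fk \<kappa> / \<Delta> + ((2 + 2 * D / \<Delta>)^2 + 1) / \<Delta> * (2 * sqrt (2 / pi))
        + 4 * D * real n / \<Delta>^2 * (2 * sqrt (2 / pi))) * \<sigma>"
proof -
  define F where "F = (real n - 1) / real n * Fk \<kappa>"
  define K where "K = (2 + 2 * D / \<Delta>)^2"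
  define M where "M = 2 * sqrt (2 / pi)"
  have ratio: "0 \<le> (real n - 1) / real n" "(real n - 1) / real n \<le> 1"
    using two_le_n by auto
  have F_bounds: "0 \<le> F" "F \<le> Fk \<kappa>"
    unfolding F_def using mult_nonneg_nonneg[OF ratio(1) Fk_nonneg] mult_right_mono[OF ratio(2) Fk_nonneg]
    by simp_all
  have "(\<rho>^2 - 1) * F \<le> (6 * (\<kappa> * \<sigma>) / \<Delta>) * Fk \<kappa>"
    using square_ratio_minus_one_le[OF \<kappa>\<sigma>_pos two_\<kappa>\<sigma>_le] F_bounds \<kappa>\<sigma>_pos gridDelta_pos
    unfolding \<rho>_def by (intro mult_mono) auto
  then have excess: "\<rho>^2 * F - F \<le> 6 * \<kappa> * Fk \<kappa> / \<Delta> * \<sigma>"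
    by (simp add: algebra_simps)
  have upper: "Lt n D (\<sigma>^2) s_hat \<le> \<rho>^2 * F + K / \<Delta> * M * \<sigma>"
    using Lt_le unfolding F_def K_def M_def by (simp add: ac_simps)
  have lower: "F - M / \<Delta> * \<sigma> - 4 * D * real n / \<Delta>^2 * M * \<sigma> \<le> Lt n D (\<sigma>^2) s_hat"
    using Lt_ge unfolding F_def M_def by (simp add: ac_simps)
  have "0 \<le> 6 * \<kappa> * Fk \<kappa> / \<Delta> * \<sigma>" "0 \<le> K / \<Delta> * M * \<sigma>" "0 \<le> M / \<Delta> * \<sigma>"
    "0 \<le> 4 * D * real n / \<Delta>^2 * M * \<sigma>"
    unfolding K_def M_def using \<kappa>_pos Fk_nonneg[of \<kappa>] \<sigma>_pos gridDelta_pos D_pos by simp_all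
  moreover have "(6 * \<kappa> * Fk \<kappa> / \<Delta> + (K + 1) / \<Delta> * M + 4 * D * real n / \<Delta>^2 * M) * \<sigma>
      = 6 * \<kappa> * Fk \<kappa> / \<Delta> * \<sigma> + K / \<Delta> * M * \<sigma> + M / \<Delta> * \<sigma> + 4 * D * real n / \<Delta>^2 * M * \<sigma>"
    by (simp add: algebra_simps add_divide_distrib)
  ultimately have "\<bar>Lt n D (\<sigma>^2) s_hat - F\<bar>
      \<le> (6 * \<kappa> * Fk \<kappa> / \<Delta> + (K + 1) / \<Delta> * M + 4 * D * real n / \<Delta>^2 * M) * \<sigma>"
    using excess upper lower unfolding abs_le_iff by (intro conjI) linarith+
  then show ?thesis
    unfolding F_def K_def M_def .
qed

end

lemma (in grid) gaussian_scale_sqrt: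
  assumes "0 < \<kappa>" "0 < t" "t < (\<Delta> / (2 * \<kappa>))^2"
  shows "gaussian_scale n D \<kappa> (sqrt t)"
proof unfold_locales
  have "sqrt t < \<Delta> / (2 * \<kappa>)"
    using assms gridDelta_pos real_sqrt_less_iff[of t "(\<Delta> / (2 * \<kappa>))^2"] by simp
  then show "2 * (\<kappa> * sqrt t) \<le> \<Delta>"
    using assms by (simp add: field_simps)
qed (use assms in auto)

theorem mainTheorem2:
  fixes n :: nat and D \<kappa> :: real
  assumes "n \<ge> 2" and "D > 0" and "\<kappa> > 0"
  shows "\<exists>t1 > 0. \<exists>C > 0. \<forall>t. 0 < t \<and> t < t1 \<longrightarrow>
           \<kappa> * sqrt t < gridDelta n D \<and>
           \<bar>Lt n D t (shat n D t (\<kappa> * sqrt t)) - (real n - 1) / real n * Fk \<kappa>\<bar> \<le> C * sqrt t"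
proof -
  interpret grid n D
    using assms by unfold_locales
  define C where "C = 6 * \<kappa> * Fk \<kappa> / \<Delta> + ((2 + 2 * D / \<Delta>)^2 + 1) / \<Delta> * (2 * sqrt (2 / pi))
    + 4 * D * real n / \<Delta>^2 * (2 * sqrt (2 / pi))"
  have "0 < C"
    unfolding C_def using assms gridDelta_pos Fk_nonneg[of \<kappa>]
    by (intro add_nonneg_pos add_pos_nonneg) auto
  moreover have "0 < (\<Delta> / (2 * \<kappa>))^2"
    using gridDelta_pos assms by simp
  moreover have "\<kappa> * sqrt t < \<Delta> \<and> \<bar>Lt n D t (shat n D t (\<kappa> * sqrt t)) - (real n - 1) / real n * Fk \<kappa>\<bar> \<le> C * sqrt t"
    if "0 < t" "t < (\<Delta> / (2 * \<kappa>))^2" for t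
  proof -
    interpret gaussian_scale n D \<kappa> "sqrt t"
      using gaussian_scale_sqrt assms(3) that .
    show ?thesis
      using abs_Lt_deviation_le \<kappa>\<sigma>_less that unfolding C_def by simp
  qed
  ultimately show ?thesis
    by blast
qed

end
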